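(* Let $\Lambda$ be a strongly connected finite $k$-graph and let $M$ be the Borel probability measure on $\Lambda^\infty$ with $M(Z(\lambda))=\rho(\Lambda)^{-d(\lambda)}x^\Lambda_{s(\lambda)}$ for all $\lambda\in\Lambda$. For $m,n\in\mathbb{N}^k$, \[M(\{x\in\Lambda^\infty:\sigma^m(x)=\sigma^n(x)\})=\begin{cases}1&\text{if }m-n\in\operatorname{Per}\Lambda,\\0&\text{otherwise.}\end{cases}\]
   Context: A $k$-graph is a countable category $\Lambda$ with a functor $d:\Lambda\to\mathbb{N}^k$ such that whenever $d(\lambda)=m+n$ there are unique $\mu,\nu$ with $d(\mu)=m$, $d(\nu)=n$, $\lambda=\mu\nu$. $\Lambda^n=d^{-1}(n)$, $\Lambda^0$ = vertices, $r,s$ range and source. Standing convention: $\Lambda^{e_i}\neq\emptyset$ for each $i$. Finite: each $\Lambda^n$ finite; strongly connected: $v\Lambda w\neq\emptyset$ for all vertices. Coordinate matrices $A_i(v,w)=|v\Lambda^{e_i}w|$, $\rho(\Lambda)^n=\prod_i\rho(A_i)^{n_i}$ (spectral radii). $x^\Lambda$ is the unique vector in $[0,\infty)^{\Lambda^0}$ with $\sum_vx^\Lambda_v=1$ and $A_ix^\Lambda=\rho(A_i)x^\Lambda$ for all $i$. (A unique such Borel probability measure $M$ exists.) Infinite paths: degree-preserving functors $x:\Omega_k\to\Lambda$, $\Omega_k=\{(m,n)\in\mathbb{N}^k\times\mathbb{N}^k:m\le n\}$ with $r(m,n)=(m,m)$, $s(m,n)=(n,n)$, $(m,n)(n,p)=(m,p)$,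 $d(m,n)=n-m$; $\Lambda^\infty$ their set, with the topology generated by the compact open sets $Z(\lambda)=\{x:x(0,d(\lambda))=\lambda\}$; $\sigma^n(x)(p,q)=x(n+p,n+q)$. $\operatorname{Per}\Lambda=\{m-n:\sigma^m(x)=\sigma^n(x)\ \forall x\in\Lambda^\infty\}$. *)

theory Defs
  imports "HOL-Probability.Probability"
begin

text \<open>A k-graph, with k the cardinality of the finite type 'k and degrees in
  'k => nat (= N^k).  The category is given by its set of morphisms; objects are
  identified with identity morphisms; rng/src give range/source identities,
  cmp mu nu is the composite mu nu (defined when src mu = rng nu).\<close>

record ('a, 'k) kgraph =
  mor :: "'a set"
  rng :: "'a \<Rightarrow> 'a"
  src :: "'a \<Rightarrow> 'a"
  cmp :: "'a \<Rightarrow> 'a \<Rightarrow> 'a"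
  deg :: "'a \<Rightarrow> 'k \<Rightarrow> nat"

definition padd :: "('k \<Rightarrow> nat) \<Rightarrow> ('k \<Rightarrow> nat) \<Rightarrow> 'k \<Rightarrow> nat" where
  "padd m n = (\<lambda>i. m i + n i)"

definition psub :: "('k \<Rightarrow> nat) \<Rightarrow> ('k \<Rightarrow> nat) \<Rightarrow> 'k \<Rightarrow> nat" where
  "psub n m = (\<lambda>i. n i - m i)"

definition zero_deg :: "'k \<Rightarrow> nat" where
  "zero_deg = (\<lambda>j. 0)"

definition unit_deg :: "'k \<Rightarrow> 'k \<Rightarrow> nat" where
  "unit_deg i = (\<lambda>j. if j = i then 1 else 0)"

definition is_category :: "('a, 'k) kgraph \<Rightarrow> bool" where
  "is_category G \<longleftrightarrow>
     countable (mor G) \<and>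
     (\<forall>l\<in>mor G. rng G l \<in> mor G \<and> src G l \<in> mor G \<and>
        rng G (rng G l) = rng G l \<and> src G (rng G l) = rng G l \<and>
        rng G (src G l) = src G l \<and> src G (src G l) = src G l \<and>
        cmp G (rng G l) l = l \<and> cmp G l (src G l) = l) \<and>
     (\<forall>m\<in>mor G. \<forall>n\<in>mor G. src G m = rng G n \<longrightarrow>
        cmp G m n \<in> mor G \<and> rng G (cmp G m n) = rng G m \<and> src G (cmp G m n) = src G n) \<and>
     (\<forall>a\<in>mor G. \<forall>b\<in>mor G. \<forall>c\<in>mor G. src G a = rng G b \<and> src G b = rng G c \<longrightarrow>
        cmp G (cmp G a b) c = cmp G a (cmp G b c))"

definition k_graph :: "('a, 'k::finite) kgraph \<Rightarrow> bool" where
  "k_graph G \<longleftrightarrow>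
     is_category G \<and>
     (\<forall>l\<in>mor G. deg G (rng G l) = zero_deg) \<and>
     (\<forall>m\<in>mor G. \<forall>n\<in>mor G. src G m = rng G n \<longrightarrow>
        deg G (cmp G m n) = padd (deg G m) (deg G n)) \<and>
     (\<forall>l\<in>mor G. \<forall>m n. deg G l = padd m n \<longrightarrow>
        (\<exists>!p. fst p \<in> mor G \<and> snd p \<in> mor G \<and> src G (fst p) = rng G (snd p) \<and>
              deg G (fst p) = m \<and> deg G (snd p) = n \<and> l = cmp G (fst p) (snd p)))"

definition layer :: "('a, 'k) kgraph \<Rightarrow> ('k \<Rightarrow> nat) \<Rightarrow> 'a set" where
  "layer G n = {l \<in> mor G. deg G l = n}"

definition verts :: "('a, 'k) kgraph \<Rightarrow> 'a set" where
  "verts G = layer G zero_deg"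

definition standing :: "('a, 'k) kgraph \<Rightarrow> bool" where
  "standing G \<longleftrightarrow> (\<forall>i. layer G (unit_deg i) \<noteq> {})"

definition finite_kgraph :: "('a, 'k) kgraph \<Rightarrow> bool" where
  "finite_kgraph G \<longleftrightarrow> (\<forall>n. finite (layer G n))"

definition strongly_connected :: "('a, 'k) kgraph \<Rightarrow> bool" where
  "strongly_connected G \<longleftrightarrow>
     (\<forall>v\<in>verts G. \<forall>w\<in>verts G. \<exists>l\<in>mor G. rng G l = v \<and> src G l = w)"

definition coord :: "('a, 'k) kgraph \<Rightarrow> 'k \<Rightarrow> 'a \<Rightarrow> 'a \<Rightarrow> nat" where
  "coord G i v w = card {l \<in> layer G (unit_deg i). rng G l = v \<and> src G l = w}"

definition eigenvalues_on :: "'a set \<Rightarrow> ('a \<Rightarrow> 'a \<Rightarrow> real) \<Rightarrow> complex set" where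
  "eigenvalues_on V A = {c. \<exists>y::'a \<Rightarrow> complex. (\<exists>v\<in>V. y v \<noteq> 0) \<and>
       (\<forall>v\<in>V. (\<Sum>w\<in>V. complex_of_real (A v w) * y w) = c * y v)}"

definition spectral_radius_on :: "'a set \<Rightarrow> ('a \<Rightarrow> 'a \<Rightarrow> real) \<Rightarrow> real" where
  "spectral_radius_on V A = Sup (cmod ` eigenvalues_on V A)"

definition rho :: "('a, 'k) kgraph \<Rightarrow> 'k \<Rightarrow> real" where
  "rho G i = spectral_radius_on (verts G) (\<lambda>v w. real (coord G i v w))"

definition rho_pow :: "('a, 'k::finite) kgraph \<Rightarrow> ('k \<Rightarrow> nat) \<Rightarrow> real" where
  "rho_pow G n = (\<Prod>i\<in>UNIV. rho G i ^ n i)"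

text \<open>The unimodular Perron-Frobenius eigenvector x^Lambda (vectors are functions
  vanishing off the vertex set).\<close>
definition xLam :: "('a, 'k) kgraph \<Rightarrow> 'a \<Rightarrow> real" where
  "xLam G = (THE x. (\<forall>v. v \<notin> verts G \<longrightarrow> x v = 0) \<and> (\<forall>v\<in>verts G. 0 \<le> x v) \<and>
      (\<Sum>v\<in>verts G. x v) = 1 \<and>
      (\<forall>i. \<forall>v\<in>verts G. (\<Sum>w\<in>verts G. real (coord G i v w) * x w) = rho G i * x v))"

text \<open>Infinite paths: degree-preserving functors Omega_k -> Lambda, represented as
  functions x m n (defined for m <= n, undefined otherwise).\<close>
definition paths :: "('a, 'k) kgraph \<Rightarrow> (('k \<Rightarrow> nat) \<Rightarrow> ('k \<Rightarrow> nat) \<Rightarrow> 'a) set" where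
  "paths G = {x.
     (\<forall>m n. m \<le> n \<longrightarrow> x m n \<in> mor G \<and> deg G (x m n) = psub n m \<and>
                          rng G (x m n) = x m m \<and> src G (x m n) = x n n) \<and>
     (\<forall>m n p. m \<le> n \<and> n \<le> p \<longrightarrow> cmp G (x m n) (x n p) = x m p) \<and>
     (\<forall>m n. \<not> m \<le> n \<longrightarrow> x m n = undefined)}"

definition cyl :: "('a, 'k) kgraph \<Rightarrow> 'a \<Rightarrow> (('k \<Rightarrow> nat) \<Rightarrow> ('k \<Rightarrow> nat) \<Rightarrow> 'a) set" where
  "cyl G l = {x \<in> paths G. x zero_deg (deg G l) = l}"

definition path_topology :: "('a, 'k) kgraph \<Rightarrow> (('k \<Rightarrow> nat) \<Rightarrow> ('k \<Rightarrow> nat) \<Rightarrow> 'a) topology" where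
  "path_topology G = topology_generated_by (cyl G ` mor G)"

definition path_borel :: "('a, 'k) kgraph \<Rightarrow> (('k \<Rightarrow> nat) \<Rightarrow> ('k \<Rightarrow> nat) \<Rightarrow> 'a) measure" where
  "path_borel G = sigma (paths G) {U. openin (path_topology G) U}"

definition shift :: "('k \<Rightarrow> nat) \<Rightarrow> (('k \<Rightarrow> nat) \<Rightarrow> ('k \<Rightarrow> nat) \<Rightarrow> 'a)
                     \<Rightarrow> ('k \<Rightarrow> nat) \<Rightarrow> ('k \<Rightarrow> nat) \<Rightarrow> 'a" where
  "shift m x = (\<lambda>p q. if p \<le> q then x (padd m p) (padd m q) else undefined)"

definition Per :: "('a, 'k) kgraph \<Rightarrow> ('k \<Rightarrow> int) set" where
  "Per G = {(\<lambda>i. int (m i) - int (n i)) | m n. \<forall>x\<in>paths G. shift m x = shift n x}"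

end

theory Submission
  imports Defs
begin

text \<open>
  Write \<open>E = {x. \<sigma>\<^sup>m x = \<sigma>\<^sup>n x}\<close>. If every path lies in \<open>E\<close>, then \<open>m - n \<in> Per \<Lambda>\<close> and
  \<open>M E = 1\<close>. Otherwise two paths that differ after shifting already differ on a finite segment,
  so some cylinder \<open>Z(\<lambda>)\<close> misses \<open>E\<close>; by strong connectivity every vertex \<open>v\<close> reaches
  such a cylinder along a path \<open>\<nu>\<^sub>v\<close>, and since the measure is multiplicative along
  composition, \<open>M(Z(\<mu>\<nu>)) \<ge> c M(Z(\<mu>))\<close> for a constant \<open>c > 0\<close> independent of \<open>\<mu>\<close>. Each cylinder
  therefore loses a fraction \<open>c\<close> of its mass to the complement of \<open>E\<close>, and iterating gives
  \<open>M(E \<inter> Z(\<mu>)) \<le> (1 - c)\<^sup>j M(Z(\<mu>))\<close> for all \<open>j\<close>, i.e. \<open>M E = 0\<close>. In that case \<open>m - n \<notin> Per \<Lambda>\<close>,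
  because any other pair with the same difference differs from \<open>(m, n)\<close> by a common shift.
\<close>

lemma padd_zero_deg [simp]: "padd m zero_deg = m" "padd zero_deg m = m"
  by (auto simp: padd_def zero_deg_def)

lemma psub_zero_deg [simp]: "psub m zero_deg = m"
  by (auto simp: psub_def zero_deg_def)

lemma zero_deg_le [simp]: "zero_deg \<le> (m::'k \<Rightarrow> nat)"
  by (auto simp: le_fun_def zero_deg_def)

lemma le_padd [simp]: "(m::'k \<Rightarrow> nat) \<le> padd m p" "(m::'k \<Rightarrow> nat) \<le> padd p m"
  by (auto simp: le_fun_def padd_def)

lemma padd_mono: "(p::'k \<Rightarrow> nat) \<le> q \<Longrightarrow> padd a p \<le> padd a q"
  by (auto simp: le_fun_def padd_def)

lemma padd_commute: "padd a b = padd b a"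
  by (auto simp: padd_def)

lemma padd_assoc: "padd (padd a b) c = padd a (padd b c)"
  by (auto simp: padd_def)

lemma psub_padd_padd [simp]: "psub (padd a q) (padd a p) = psub q p"
  by (auto simp: psub_def padd_def)

lemma psub_padd_left [simp]: "psub (padd a p) a = p"
  by (auto simp: psub_def padd_def)

lemma shift_shift: "shift p (shift q x) = shift (padd q p) x"
  by (intro ext) (auto simp: shift_def padd_assoc padd_mono)

lemma rho_pow_zero_deg [simp]: "rho_pow G zero_deg = 1"
  by (simp add: rho_pow_def zero_deg_def)

lemma rho_pow_padd: "rho_pow G (padd a b) = rho_pow G a * rho_pow G b"
  by (simp add: rho_pow_def padd_def power_add prod.distrib)

lemma rho_pow_unit_deg: "rho_pow G (unit_deg i) = rho G i"
proof -
  have "rho_pow G (unit_deg i) = (\<Prod>j\<in>UNIV. if j = i then rho G j else 1)"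
    unfolding rho_pow_def unit_deg_def by (rule prod.cong) auto
  also have "\<dots> = rho G i" by simp
  finally show ?thesis .
qed

lemma rho_pow_nonzero: "(\<And>i. rho G i \<noteq> 0) \<Longrightarrow> rho_pow G d \<noteq> 0"
  by (simp add: rho_pow_def)

definition equaliser :: "('a, 'k) kgraph \<Rightarrow> ('k \<Rightarrow> nat) \<Rightarrow> ('k \<Rightarrow> nat)
    \<Rightarrow> (('k \<Rightarrow> nat) \<Rightarrow> ('k \<Rightarrow> nat) \<Rightarrow> 'a) set" where
  "equaliser G m n = {x \<in> paths G. shift m x = shift n x}"

locale kgraph_theory =
  fixes G :: "('a, 'k::finite) kgraph"
  assumes k_graph: "k_graph G"
begin

lemma rng_mor: "l \<in> mor G \<Longrightarrow> rng G l \<in> mor G"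
  and src_mor: "l \<in> mor G \<Longrightarrow> src G l \<in> mor G"
  and src_rng: "l \<in> mor G \<Longrightarrow> src G (rng G l) = rng G l"
  and rng_src: "l \<in> mor G \<Longrightarrow> rng G (src G l) = src G l"
  and cmp_rng: "l \<in> mor G \<Longrightarrow> cmp G (rng G l) l = l"
  and cmp_src: "l \<in> mor G \<Longrightarrow> cmp G l (src G l) = l"
  and cmp_mor: "\<lbrakk>a \<in> mor G; b \<in> mor G; src G a = rng G b\<rbrakk> \<Longrightarrow> cmp G a b \<in> mor G"
  and rng_cmp: "\<lbrakk>a \<in> mor G; b \<in> mor G; src G a = rng G b\<rbrakk> \<Longrightarrow> rng G (cmp G a b) = rng G a"
  and src_cmp: "\<lbrakk>a \<in> mor G; b \<in> mor G; src G a = rng G b\<rbrakk> \<Longrightarrow> src G (cmp G a b) = src G b"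
  and countable_mor: "countable (mor G)"
  using k_graph unfolding k_graph_def is_category_def by blast+

lemma deg_rng: "l \<in> mor G \<Longrightarrow> deg G (rng G l) = zero_deg"
  and deg_cmp: "\<lbrakk>a \<in> mor G; b \<in> mor G; src G a = rng G b\<rbrakk> \<Longrightarrow>
      deg G (cmp G a b) = padd (deg G a) (deg G b)"
  using k_graph unfolding k_graph_def by blast+

lemma deg_src: "l \<in> mor G \<Longrightarrow> deg G (src G l) = zero_deg"
  by (metis deg_rng rng_src src_mor)

lemma rng_in_verts: "l \<in> mor G \<Longrightarrow> rng G l \<in> verts G"
  and src_in_verts: "l \<in> mor G \<Longrightarrow> src G l \<in> verts G"
  by (simp_all add: verts_def layer_def rng_mor src_mor deg_rng deg_src)

lemma verts_mor: "v \<in> verts G \<Longrightarrow> v \<in> mor G"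
  and verts_deg: "v \<in> verts G \<Longrightarrow> deg G v = zero_deg"
  by (simp_all add: verts_def layer_def)

lemma factorisation_exists:
  assumes "l \<in> mor G" "deg G l = padd a b"
  obtains \<mu> \<nu> where "\<mu> \<in> mor G" "\<nu> \<in> mor G" "src G \<mu> = rng G \<nu>"
    "deg G \<mu> = a" "deg G \<nu> = b" "l = cmp G \<mu> \<nu>"
  using k_graph assms unfolding k_graph_def by blast

lemma factorisation_unique:
  assumes "\<mu> \<in> mor G" "\<nu> \<in> mor G" "\<mu>' \<in> mor G" "\<nu>' \<in> mor G"
    "src G \<mu> = rng G \<nu>" "src G \<mu>' = rng G \<nu>'" "deg G \<mu> = deg G \<mu>'" "deg G \<nu> = deg G \<nu>'"
    "cmp G \<mu> \<nu> = cmp G \<mu>' \<nu>'"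
  shows "\<mu> = \<mu>'" and "\<nu> = \<nu>'"
proof -
  have "cmp G \<mu> \<nu> \<in> mor G" "deg G (cmp G \<mu> \<nu>) = padd (deg G \<mu>) (deg G \<nu>)"
    using assms cmp_mor deg_cmp by blast+
  then have "\<exists>!p. fst p \<in> mor G \<and> snd p \<in> mor G \<and> src G (fst p) = rng G (snd p) \<and>
      deg G (fst p) = deg G \<mu> \<and> deg G (snd p) = deg G \<nu> \<and> cmp G \<mu> \<nu> = cmp G (fst p) (snd p)"
    using k_graph unfolding k_graph_def by blast
  then have "(\<mu>, \<nu>) = (\<mu>', \<nu>')"
    using assms by (metis fst_conv snd_conv)
  then show "\<mu> = \<mu>'" "\<nu> = \<nu>'" by simp_all
qed

lemma deg_zero_is_vertex:
  assumes "l \<in> mor G" "deg G l = zero_deg"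
  shows "rng G l = l" "src G l = l"
proof -
  have "rng G l = l" "l = src G l"
    by (rule factorisation_unique[of "rng G l" l l "src G l"];
        use assms in \<open>simp add: rng_mor src_mor src_rng rng_src deg_rng deg_src cmp_rng cmp_src\<close>)+
  then show "rng G l = l" "src G l = l" by simp_all
qed

lemma path_mor: "x \<in> paths G \<Longrightarrow> a \<le> b \<Longrightarrow> x a b \<in> mor G"
  and path_deg: "x \<in> paths G \<Longrightarrow> a \<le> b \<Longrightarrow> deg G (x a b) = psub b a"
  and path_rng: "x \<in> paths G \<Longrightarrow> a \<le> b \<Longrightarrow> rng G (x a b) = x a a"
  and path_src: "x \<in> paths G \<Longrightarrow> a \<le> b \<Longrightarrow> src G (x a b) = x b b"
  and path_cmp: "x \<in> paths G \<Longrightarrow> a \<le> b \<Longrightarrow> b \<le> c \<Longrightarrow> cmp G (x a b) (x b c) = x a c"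
  unfolding paths_def by blast+

lemma path_segments_eq:
  assumes x: "x \<in> paths G" and y: "y \<in> paths G"
    and ab: "a \<le> b" and bc: "b \<le> c" and ab': "a' \<le> b'" and bc': "b' \<le> c'"
    and "psub b a = psub b' a'" "psub c b = psub c' b'" and ac: "x a c = y a' c'"
  shows "x a b = y a' b'" and "x b c = y b' c'"
proof -
  have "cmp G (x a b) (x b c) = cmp G (y a' b') (y b' c')"
    using path_cmp[OF x ab bc] path_cmp[OF y ab' bc'] ac by simp
  note eq = factorisation_unique[OF path_mor[OF x ab] path_mor[OF x bc] path_mor[OF y ab']
      path_mor[OF y bc'] _ _ _ _ this]
  show "x a b = y a' b'" "x b c = y b' c'"
    by (rule eq; simp add: assms path_deg path_rng path_src)+
qed

lemma path_eq_below:
  assumes x: "x \<in> paths G" and y: "y \<in> paths G"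
    and eq: "x zero_deg T = y zero_deg T" and ab: "a \<le> b" and bT: "b \<le> T"
  shows "x a b = y a b"
proof -
  have aT: "a \<le> T" using ab bT by (rule order_trans)
  have "x a T = y a T" using path_segments_eq(2)[OF x y zero_deg_le aT zero_deg_le aT refl refl eq] .
  then show ?thesis using path_segments_eq(1)[OF x y ab bT ab bT refl refl] by blast
qed

lemma shift_in_paths:
  assumes x: "x \<in> paths G" shows "shift a x \<in> paths G"
proof -
  have mono: "padd a p \<le> padd a q" if "p \<le> q" for p q using that by (rule padd_mono)
  have "shift a x p q \<in> mor G \<and> deg G (shift a x p q) = psub q p \<and>
      rng G (shift a x p q) = shift a x p p \<and> src G (shift a x p q) = shift a x q q"
    if "p \<le> q" for p q
    using that mono[OF that] by (simp add: shift_def path_mor[OF x] path_deg[OF x] path_rng[OF x] path_src[OF x])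
  moreover have "cmp G (shift a x p q) (shift a x q r) = shift a x p r" if "p \<le> q" "q \<le> r" for p q r
    using that mono[OF that(1)] mono[OF that(2)] order_trans[OF that]
    by (simp add: shift_def path_cmp[OF x])
  moreover have "shift a x p q = undefined" if "\<not> p \<le> q" for p q
    using that by (simp add: shift_def)
  ultimately show ?thesis unfolding paths_def by blast
qed

lemma shift_eq_iff:
  assumes x: "x \<in> paths G"
  shows "shift m x = shift n x \<longleftrightarrow> (\<forall>p. x m (padd m p) = x n (padd n p))"
proof
  assume eq: "shift m x = shift n x"
  show "\<forall>p. x m (padd m p) = x n (padd n p)"
  proof
    fix p
    have "shift m x zero_deg p = shift n x zero_deg p" using eq by simp
    then show "x m (padd m p) = x n (padd n p)" by (simp add: shift_def)
  qed
next
  assume h: "\<forall>p. x m (padd m p) = x n (padd n p)"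
  have "x (padd m p) (padd m q) = x (padd n p) (padd n q)" if pq: "p \<le> q" for p q
    \<comment> \<open>the segments of degree \<open>q\<close> starting at \<open>m\<close> and \<open>n\<close> agree, hence so do their tails beyond degree \<open>p\<close>\<close>
    by (rule path_segments_eq(2)[OF x x, of m _ _ n])
       (use pq h in \<open>simp_all add: padd_mono\<close>)
  then show "shift m x = shift n x"
    unfolding shift_def by (intro ext) simp
qed

definition extensions :: "'a \<Rightarrow> ('k \<Rightarrow> nat) \<Rightarrow> 'a set" where
  "extensions \<mu> p = {\<nu> \<in> mor G. rng G \<nu> = src G \<mu> \<and> deg G \<nu> = p}"

lemma finite_extensions: "finite_kgraph G \<Longrightarrow> finite (extensions \<mu> p)"
  unfolding finite_kgraph_def extensions_def layer_def
  by (rule finite_subset[of _ "{l \<in> mor G. deg G l = p}"]) auto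

lemma cyl_subset_paths: "cyl G l \<subseteq> paths G"
  by (auto simp: cyl_def)

lemma cyl_cmpD:
  assumes \<mu>: "\<mu> \<in> mor G" and \<nu>: "\<nu> \<in> mor G" and c: "src G \<mu> = rng G \<nu>"
    and x: "x \<in> cyl G (cmp G \<mu> \<nu>)"
  shows "x \<in> cyl G \<mu>" and "shift (deg G \<mu>) x \<in> cyl G \<nu>"
proof -
  let ?T = "padd (deg G \<mu>) (deg G \<nu>)"
  have xp: "x \<in> paths G" and xe: "x zero_deg ?T = cmp G \<mu> \<nu>"
    using x deg_cmp[OF \<mu> \<nu> c] unfolding cyl_def by auto
  have le: "zero_deg \<le> deg G \<mu>" "deg G \<mu> \<le> ?T" by simp_all
  have "cmp G (x zero_deg (deg G \<mu>)) (x (deg G \<mu>) ?T) = cmp G \<mu> \<nu>"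
    using path_cmp[OF xp le] xe by simp
  note eq = factorisation_unique[OF path_mor[OF xp le(1)] path_mor[OF xp le(2)] \<mu> \<nu> _ c _ _ this]
  have "x zero_deg (deg G \<mu>) = \<mu>" "x (deg G \<mu>) ?T = \<nu>"
    by (rule eq; simp add: xp path_deg path_rng path_src)+
  then show "x \<in> cyl G \<mu>" "shift (deg G \<mu>) x \<in> cyl G \<nu>"
    using xp shift_in_paths[OF xp] unfolding cyl_def shift_def by auto
qed

lemma cyl_cmp_subset:
  assumes "\<mu> \<in> mor G" "\<nu> \<in> mor G" "src G \<mu> = rng G \<nu>"
  shows "cyl G (cmp G \<mu> \<nu>) \<subseteq> cyl G \<mu>"
  using cyl_cmpD[OF assms] by blast

lemma cyl_subset_cyl_rng: "\<nu> \<in> mor G \<Longrightarrow> cyl G \<nu> \<subseteq> cyl G (rng G \<nu>)"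
  using cyl_cmp_subset[OF rng_mor, of \<nu> \<nu>] by (simp add: cmp_rng src_rng)

lemma cyl_eq_UN_extensions:
  assumes \<mu>: "\<mu> \<in> mor G"
  shows "cyl G \<mu> = (\<Union>\<nu>\<in>extensions \<mu> p. cyl G (cmp G \<mu> \<nu>))"
proof
  show "(\<Union>\<nu>\<in>extensions \<mu> p. cyl G (cmp G \<mu> \<nu>)) \<subseteq> cyl G \<mu>"
  proof (rule UN_least)
    fix \<nu> assume "\<nu> \<in> extensions \<mu> p"
    then show "cyl G (cmp G \<mu> \<nu>) \<subseteq> cyl G \<mu>"
      using cyl_cmp_subset[OF \<mu>] unfolding extensions_def by auto
  qed
next
  show "cyl G \<mu> \<subseteq> (\<Union>\<nu>\<in>extensions \<mu> p. cyl G (cmp G \<mu> \<nu>))"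
  proof
    fix x assume x: "x \<in> cyl G \<mu>"
    let ?\<nu> = "x (deg G \<mu>) (padd (deg G \<mu>) p)"
    have xp: "x \<in> paths G" and xe: "x zero_deg (deg G \<mu>) = \<mu>"
      using x unfolding cyl_def by auto
    have \<nu>: "?\<nu> \<in> extensions \<mu> p"
      using path_mor[OF xp] path_deg[OF xp] path_rng[OF xp] path_src[OF xp zero_deg_le, of "deg G \<mu>"] xe
      unfolding extensions_def by auto
    then have "deg G (cmp G \<mu> ?\<nu>) = padd (deg G \<mu>) p"
      using deg_cmp[OF \<mu>] unfolding extensions_def by auto
    moreover have "x zero_deg (padd (deg G \<mu>) p) = cmp G \<mu> ?\<nu>"
      using path_cmp[OF xp zero_deg_le, of "deg G \<mu>" "padd (deg G \<mu>) p"] xe by simp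
    ultimately have "x \<in> cyl G (cmp G \<mu> ?\<nu>)" using xp unfolding cyl_def by auto
    with \<nu> show "x \<in> (\<Union>\<nu>\<in>extensions \<mu> p. cyl G (cmp G \<mu> \<nu>))" by blast
  qed
qed

lemma disjoint_family_cyl_extensions:
  assumes \<mu>: "\<mu> \<in> mor G"
  shows "disjoint_family_on (\<lambda>\<nu>. cyl G (cmp G \<mu> \<nu>)) (extensions \<mu> p)"
  unfolding disjoint_family_on_def
proof (intro ballI impI, rule ccontr)
  fix a b assume a: "a \<in> extensions \<mu> p" and b: "b \<in> extensions \<mu> p" and "a \<noteq> b"
    and "cyl G (cmp G \<mu> a) \<inter> cyl G (cmp G \<mu> b) \<noteq> {}"
  then obtain x where "x \<in> cyl G (cmp G \<mu> a)" "x \<in> cyl G (cmp G \<mu> b)" by blast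
  then have "shift (deg G \<mu>) x \<in> cyl G a" "shift (deg G \<mu>) x \<in> cyl G b"
    using cyl_cmpD[OF \<mu>] a b unfolding extensions_def by auto
  with a b \<open>a \<noteq> b\<close> show False unfolding extensions_def cyl_def by auto
qed

lemma paths_eq_UN_cyl_verts: "paths G = (\<Union>v\<in>verts G. cyl G v)"
proof
  show "paths G \<subseteq> (\<Union>v\<in>verts G. cyl G v)"
  proof
    fix x assume x: "x \<in> paths G"
    then have "x zero_deg zero_deg \<in> verts G" "x \<in> cyl G (x zero_deg zero_deg)"
      using path_mor[OF x] path_deg[OF x] unfolding verts_def layer_def cyl_def by auto
    then show "x \<in> (\<Union>v\<in>verts G. cyl G v)" by blast
  qed
qed (auto simp: cyl_def)

lemma equaliser_avoided_by_cylinder: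
  assumes y: "y \<in> paths G" and ne: "shift m y \<noteq> shift n y"
  obtains l where "l \<in> mor G" "cyl G l \<inter> equaliser G m n = {}"
proof -
  obtain p where p: "y m (padd m p) \<noteq> y n (padd n p)" using shift_eq_iff[OF y] ne by blast
  define T where "T = padd (padd m n) p"
  have le: "padd m p \<le> T" "padd n p \<le> T" unfolding T_def by (auto simp: le_fun_def padd_def)
  have "x \<notin> equaliser G m n" if x: "x \<in> cyl G (y zero_deg T)" for x
  proof -
    have xp: "x \<in> paths G" and xe: "x zero_deg T = y zero_deg T"
      using x path_deg[OF y] unfolding cyl_def by auto
    have "x m (padd m p) = y m (padd m p)" "x n (padd n p) = y n (padd n p)"
      using path_eq_below[OF xp y xe le_padd(1) le(1)] path_eq_below[OF xp y xe le_padd(1) le(2)] .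
    then have "x m (padd m p) \<noteq> x n (padd n p)" using p by simp
    then have "shift m x \<noteq> shift n x" unfolding shift_eq_iff[OF xp] by blast
    then show ?thesis unfolding equaliser_def by blast
  qed
  moreover have "y zero_deg T \<in> mor G" using path_mor[OF y zero_deg_le] .
  ultimately show ?thesis using that by blast
qed

lemma cyl_cmp_disjoint_equaliser:
  assumes "cyl G l \<inter> equaliser G m n = {}"
    and \<mu>: "\<mu> \<in> mor G" and l: "l \<in> mor G" and c: "src G \<mu> = rng G l"
  shows "cyl G (cmp G \<mu> l) \<inter> equaliser G m n = {}"
proof -
  have "shift m x \<noteq> shift n x" if x: "x \<in> cyl G (cmp G \<mu> l)" for x
  proof
    assume "shift m x = shift n x"
    then have "shift (deg G \<mu>) (shift m x) = shift (deg G \<mu>) (shift n x)" by simp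
    then have "shift m (shift (deg G \<mu>) x) = shift n (shift (deg G \<mu>) x)"
      by (simp add: shift_shift padd_commute)
    moreover have "shift (deg G \<mu>) x \<in> cyl G l" using cyl_cmpD(2)[OF \<mu> l c x] .
    ultimately show False using assms(1) cyl_subset_paths unfolding equaliser_def by blast
  qed
  then show ?thesis unfolding equaliser_def by blast
qed

end

locale kgraph_measure = kgraph_theory G + prob_space M
  for G :: "('a, 'k::finite) kgraph"
    and M :: "(('k \<Rightarrow> nat) \<Rightarrow> ('k \<Rightarrow> nat) \<Rightarrow> 'a) measure" +
  assumes finite_kgraph: "finite_kgraph G"
    and strongly_connected: "strongly_connected G"
    and space_M: "space M = paths G"
    and sets_M: "sets M = sets (path_borel G)"
    and measure_cyl: "l \<in> mor G \<Longrightarrow>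
      measure M (cyl G l) = inverse (rho_pow G (deg G l)) * xLam G (src G l)"
begin

lemma sets_cyl:
  assumes "l \<in> mor G" shows "cyl G l \<in> sets M"
proof -
  have "\<Union> (cyl G ` mor G) \<subseteq> paths G" using cyl_subset_paths by blast
  then have "{U. openin (path_topology G) U} \<subseteq> Pow (paths G)"
    unfolding path_topology_def using openin_subset by fastforce
  then have "sets M = sigma_sets (paths G) {U. openin (path_topology G) U}"
    using sets_M unfolding path_borel_def by simp
  moreover have "openin (path_topology G) (cyl G l)"
    using assms unfolding path_topology_def
    by (auto simp: openin_topology_generated_by_iff intro: generate_topology_on.Basis)
  ultimately show ?thesis by auto
qed

lemma measure_cyl_vertex: "v \<in> verts G \<Longrightarrow> measure M (cyl G v) = xLam G v"
  using measure_cyl[OF verts_mor] deg_zero_is_vertex[OF verts_mor verts_deg] by (simp add: verts_deg)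

lemma measure_cyl_eq_src:
  "l \<in> mor G \<Longrightarrow> measure M (cyl G l) = inverse (rho_pow G (deg G l)) * measure M (cyl G (src G l))"
  using measure_cyl measure_cyl_vertex[OF src_in_verts] by simp

lemma measure_cyl_cmp:
  assumes \<mu>: "\<mu> \<in> mor G" and \<nu>: "\<nu> \<in> mor G" and c: "src G \<mu> = rng G \<nu>"
  shows "measure M (cyl G (cmp G \<mu> \<nu>)) * measure M (cyl G (src G \<mu>)) =
         measure M (cyl G \<mu>) * measure M (cyl G \<nu>)"
  using measure_cyl_vertex[OF src_in_verts[OF \<mu>]]
  by (simp add: measure_cyl \<mu> \<nu> c cmp_mor src_cmp deg_cmp rho_pow_padd)

lemma measure_cyl_eq_sum_extensions:
  assumes \<mu>: "\<mu> \<in> mor G"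
  shows "measure M (cyl G \<mu>) = (\<Sum>\<nu>\<in>extensions \<mu> p. measure M (cyl G (cmp G \<mu> \<nu>)))"
  unfolding cyl_eq_UN_extensions[OF \<mu>, of p]
  using finite_extensions[OF finite_kgraph] disjoint_family_cyl_extensions[OF \<mu>]
    sets_cyl cmp_mor[OF \<mu>]
  by (intro finite_measure_finite_Union) (auto simp: extensions_def)

lemma finite_verts: "finite (verts G)"
  using finite_kgraph unfolding finite_kgraph_def verts_def by blast

lemma measure_le_sum_cyl_verts:
  assumes "E \<in> sets M"
  shows "measure M E \<le> (\<Sum>v\<in>verts G. measure M (E \<inter> cyl G v))"
proof -
  have "(\<Union>v\<in>verts G. E \<inter> cyl G v) = E"
    using sets.sets_into_space[OF assms] space_M paths_eq_UN_cyl_verts by auto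
  moreover have "measure M (\<Union>v\<in>verts G. E \<inter> cyl G v) \<le> (\<Sum>v\<in>verts G. measure M (E \<inter> cyl G v))"
    using assms sets_cyl verts_mor by (intro finite_measure_subadditive_finite[OF finite_verts]) auto
  ultimately show ?thesis by simp
qed

lemma exists_vertex_measure_pos: "\<exists>w\<in>verts G. measure M (cyl G w) > 0"
proof (rule ccontr)
  assume "\<not> ?thesis"
  moreover have "space M \<inter> cyl G v = cyl G v" for v
    using space_M cyl_subset_paths by blast
  ultimately have "(\<Sum>v\<in>verts G. measure M (space M \<inter> cyl G v)) \<le> 0"
    by (auto intro!: sum_nonpos simp: not_less)
  then show False
    using measure_le_sum_cyl_verts[OF sets.top] prob_space by simp
qed

lemma rho_nonzero: "rho G i \<noteq> 0"
proof
  assume "rho G i = 0"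
  obtain w where w: "w \<in> verts G" "measure M (cyl G w) > 0"
    using exists_vertex_measure_pos by blast
  have "measure M (cyl G (cmp G w \<nu>)) = 0" if "\<nu> \<in> extensions w (unit_deg i)" for \<nu>
    using that w(1) \<open>rho G i = 0\<close> deg_zero_is_vertex[OF verts_mor verts_deg, OF w(1)]
    by (auto simp: extensions_def cmp_rng measure_cyl rho_pow_unit_deg)
  then have "measure M (cyl G w) = 0"
    using measure_cyl_eq_sum_extensions[OF verts_mor[OF w(1)], of "unit_deg i"] by simp
  with w show False by simp
qed

lemma measure_cyl_vertex_pos:
  assumes v: "v \<in> verts G" shows "measure M (cyl G v) > 0"
proof -
  obtain w where w: "w \<in> verts G" "measure M (cyl G w) > 0"
    using exists_vertex_measure_pos by blast
  obtain b where b: "b \<in> mor G" "rng G b = v" "src G b = w"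
    using strongly_connected v w unfolding strongly_connected_def by blast
  have "measure M (cyl G b) \<noteq> 0"
    using measure_cyl_eq_src[OF b(1)] w b rho_pow_nonzero[OF rho_nonzero] by simp
  then have "measure M (cyl G b) > 0" by (simp add: zero_less_measure_iff)
  also have "measure M (cyl G b) \<le> measure M (cyl G v)"
    using finite_measure_mono[OF cyl_subset_cyl_rng sets_cyl] b rng_mor by blast
  finally show ?thesis .
qed

lemma measure_cyl_pos:
  assumes "l \<in> mor G" shows "measure M (cyl G l) > 0"
proof -
  have "measure M (cyl G l) \<noteq> 0"
    using measure_cyl_eq_src[OF assms] measure_cyl_vertex_pos[OF src_in_verts[OF assms]]
      rho_pow_nonzero[OF rho_nonzero] by simp
  then show ?thesis by (simp add: zero_less_measure_iff)
qed

lemma cyl_nonempty: "l \<in> mor G \<Longrightarrow> cyl G l \<noteq> {}"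
  using measure_cyl_pos by fastforce

lemma sets_determined_by_segment:
  assumes sub: "S \<subseteq> paths G"
    and det: "\<And>x y. x \<in> S \<Longrightarrow> y \<in> paths G \<Longrightarrow> y zero_deg T = x zero_deg T \<Longrightarrow> y \<in> S"
  shows "S \<in> sets M"
proof -
  have seg: "(\<lambda>x. x zero_deg T) ` S \<subseteq> mor G"
    using path_mor[OF subsetD[OF sub] zero_deg_le] by blast
  have deg: "deg G (x zero_deg T) = T" if "x \<in> S" for x
    using path_deg[OF subsetD[OF sub that] zero_deg_le] by simp
  have "S = \<Union> (cyl G ` (\<lambda>x. x zero_deg T) ` S)"
  proof
    show "S \<subseteq> \<Union> (cyl G ` (\<lambda>x. x zero_deg T) ` S)"
    proof
      fix x assume x: "x \<in> S"
      then have "x \<in> cyl G (x zero_deg T)" using sub deg by (auto simp: cyl_def)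
      with x show "x \<in> \<Union> (cyl G ` (\<lambda>x. x zero_deg T) ` S)" by blast
    qed
    show "\<Union> (cyl G ` (\<lambda>x. x zero_deg T) ` S) \<subseteq> S"
      using det deg by (auto simp: cyl_def)
  qed
  also have "\<dots> \<in> sets M"
    using seg countable_subset[OF seg countable_mor] sets_cyl by (intro sets.countable_Union) auto
  finally show ?thesis .
qed

lemma sets_equaliser: "equaliser G m n \<in> sets M"
proof -
  define S where "S p = {x \<in> paths G. x m (padd m p) = x n (padd n p)}" for p
  have "S p \<in> sets M" for p
  proof (rule sets_determined_by_segment)
    fix x y assume x: "x \<in> S p" and y: "y \<in> paths G"
      and eq: "y zero_deg (padd (padd m n) p) = x zero_deg (padd (padd m n) p)"
    have "padd m p \<le> padd (padd m n) p" "padd n p \<le> padd (padd m n) p"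
      by (auto simp: le_fun_def padd_def)
    moreover have xp: "x \<in> paths G" using x unfolding S_def by blast
    ultimately show "y \<in> S p"
      using x y path_eq_below[OF y xp eq le_padd(1)] unfolding S_def by auto
  qed (auto simp: S_def)
  moreover have "equaliser G m n = (\<Inter>p. S p)"
    unfolding S_def equaliser_def using shift_eq_iff by auto
  ultimately show ?thesis by auto
qed

lemma exists_mor_src_deg:
  assumes u: "u \<in> verts G" obtains \<kappa> where "\<kappa> \<in> mor G" "src G \<kappa> = u" "deg G \<kappa> = b"
proof -
  obtain x where x: "x \<in> cyl G u" using cyl_nonempty[OF verts_mor[OF u]] by blast
  have xp: "x \<in> paths G" and xu: "x zero_deg zero_deg = u"
    using x verts_deg[OF u] unfolding cyl_def by auto
  let ?g = "x zero_deg b"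
  have g: "?g \<in> mor G" "deg G ?g = b" "rng G ?g = u"
    using path_mor[OF xp] path_deg[OF xp] path_rng[OF xp] xu by auto
  \<comment> \<open>the cycle \<open>?g \<beta>\<close> at \<open>u\<close> has a terminal segment of degree \<open>b\<close>, which ends at \<open>u\<close>\<close>
  obtain \<beta> where \<beta>: "\<beta> \<in> mor G" "rng G \<beta> = src G ?g" "src G \<beta> = u"
    using strongly_connected u src_in_verts[OF g(1)] unfolding strongly_connected_def by blast
  have g\<beta>: "src G ?g = rng G \<beta>" using \<beta>(2) by simp
  have "deg G (cmp G ?g \<beta>) = padd (deg G \<beta>) b"
    using deg_cmp[OF g(1) \<beta>(1) g\<beta>] g(2) by (simp add: padd_commute)
  then obtain \<kappa>1 \<kappa> where \<kappa>: "\<kappa>1 \<in> mor G" "\<kappa> \<in> mor G" "src G \<kappa>1 = rng G \<kappa>" "deg G \<kappa> = b"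
      "cmp G ?g \<beta> = cmp G \<kappa>1 \<kappa>"
    using factorisation_exists[OF cmp_mor[OF g(1) \<beta>(1) g\<beta>]] by blast
  have "src G \<kappa> = src G (cmp G ?g \<beta>)" using src_cmp[OF \<kappa>(1-3)] \<kappa>(5) by simp
  also have "\<dots> = u" using src_cmp[OF g(1) \<beta>(1) g\<beta>] \<beta>(3) by simp
  finally show ?thesis using that \<kappa>(2,4) by blast
qed

definition uniformly_avoided :: "real \<Rightarrow> (('k \<Rightarrow> nat) \<Rightarrow> ('k \<Rightarrow> nat) \<Rightarrow> 'a) set \<Rightarrow> bool" where
  "uniformly_avoided c E \<longleftrightarrow> (\<forall>\<mu>\<in>mor G. \<exists>\<nu>\<in>mor G. rng G \<nu> = src G \<mu> \<and>
      cyl G (cmp G \<mu> \<nu>) \<inter> E = {} \<and> c * measure M (cyl G \<mu>) \<le> measure M (cyl G (cmp G \<mu> \<nu>)))"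

lemma measure_Int_cyl_le_power:
  assumes E: "E \<in> sets M" and c: "c \<le> 1"
    and avoid: "uniformly_avoided c E"
    and \<mu>: "\<mu> \<in> mor G"
  shows "measure M (E \<inter> cyl G \<mu>) \<le> (1 - c) ^ j * measure M (cyl G \<mu>)"
  using \<mu>
proof (induction j arbitrary: \<mu>)
  case 0
  then show ?case using finite_measure_mono[OF Int_lower2 sets_cyl] by simp
next
  case (Suc j)
  obtain \<nu> where \<nu>: "\<nu> \<in> mor G" "rng G \<nu> = src G \<mu>" "cyl G (cmp G \<mu> \<nu>) \<inter> E = {}"
    and large: "c * measure M (cyl G \<mu>) \<le> measure M (cyl G (cmp G \<mu> \<nu>))"
    using avoid Suc.prems unfolding uniformly_avoided_def by blast
  define Ns where "Ns = extensions \<mu> (deg G \<nu>)"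
  have Ns: "finite Ns" "\<nu> \<in> Ns" "\<And>a. a \<in> Ns \<Longrightarrow> cmp G \<mu> a \<in> mor G"
    using finite_extensions[OF finite_kgraph] \<nu> cmp_mor[OF Suc.prems]
    by (auto simp: Ns_def extensions_def)
  have "E \<inter> cyl G \<mu> \<subseteq> (\<Union>a\<in>Ns - {\<nu>}. E \<inter> cyl G (cmp G \<mu> a))"
    using cyl_eq_UN_extensions[OF Suc.prems, of "deg G \<nu>"] \<nu>(3) unfolding Ns_def by blast
  then have "measure M (E \<inter> cyl G \<mu>) \<le> measure M (\<Union>a\<in>Ns - {\<nu>}. E \<inter> cyl G (cmp G \<mu> a))"
    using Ns E sets_cyl by (intro finite_measure_mono sets.finite_UN) auto
  also have "\<dots> \<le> (\<Sum>a\<in>Ns - {\<nu>}. measure M (E \<inter> cyl G (cmp G \<mu> a)))"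
    using Ns E sets_cyl by (intro finite_measure_subadditive_finite) auto
  also have "\<dots> \<le> (\<Sum>a\<in>Ns - {\<nu>}. (1 - c) ^ j * measure M (cyl G (cmp G \<mu> a)))"
    using Ns Suc.IH by (intro sum_mono) auto
  also have "\<dots> = (1 - c) ^ j * (\<Sum>a\<in>Ns - {\<nu>}. measure M (cyl G (cmp G \<mu> a)))"
    by (simp add: sum_distrib_left)
  also have "(\<Sum>a\<in>Ns - {\<nu>}. measure M (cyl G (cmp G \<mu> a))) =
      measure M (cyl G \<mu>) - measure M (cyl G (cmp G \<mu> \<nu>))"
    using Ns measure_cyl_eq_sum_extensions[OF Suc.prems, of "deg G \<nu>"] by (simp add: sum_diff1 Ns_def)
  also have "(1 - c) ^ j * (measure M (cyl G \<mu>) - measure M (cyl G (cmp G \<mu> \<nu>)))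
      \<le> (1 - c) ^ j * ((1 - c) * measure M (cyl G \<mu>))"
    using large c by (intro mult_left_mono) (auto simp: algebra_simps)
  finally show ?case by (simp add: ac_simps)
qed

lemma measure_null_if_uniformly_avoided:
  assumes E: "E \<in> sets M" and c: "0 < c" "c \<le> 1"
    and avoid: "uniformly_avoided c E"
  shows "measure M E = 0"
proof -
  have "measure M (E \<inter> cyl G v) \<le> 0" if v: "v \<in> verts G" for v
  proof -
    have "(\<lambda>j. (1 - c) ^ j * measure M (cyl G v)) \<longlonglongrightarrow> 0 * measure M (cyl G v)"
      using c by (intro tendsto_mult tendsto_const LIMSEQ_power_zero) auto
    then show ?thesis
      using LIMSEQ_le_const measure_Int_cyl_le_power[OF E c(2) avoid verts_mor[OF v]] by fastforce
  qed
  then have "(\<Sum>v\<in>verts G. measure M (E \<inter> cyl G v)) \<le> 0" by (intro sum_nonpos) auto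
  then show ?thesis using measure_le_sum_cyl_verts[OF E] measure_nonneg[of M E] by linarith
qed

lemma uniform_ratio_cyl_cmp:
  assumes f: "\<And>v. v \<in> verts G \<Longrightarrow> f v \<in> mor G \<and> rng G (f v) = v"
  obtains c where "0 < c" "c \<le> 1"
    "\<And>\<mu>. \<mu> \<in> mor G \<Longrightarrow> c * measure M (cyl G \<mu>) \<le> measure M (cyl G (cmp G \<mu> (f (src G \<mu>))))"
proof -
  define c where "c = Min ((\<lambda>v. measure M (cyl G (f v)) / measure M (cyl G v)) ` verts G)"
  have ne: "verts G \<noteq> {}" using exists_vertex_measure_pos by blast
  have c_le: "c * measure M (cyl G v) \<le> measure M (cyl G (f v))" if v: "v \<in> verts G" for v
  proof -
    have "c \<le> measure M (cyl G (f v)) / measure M (cyl G v)"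
      unfolding c_def using finite_verts v by simp
    then show ?thesis using measure_cyl_vertex_pos[OF v] by (simp add: pos_le_divide_eq)
  qed
  have "0 < c"
    unfolding c_def using finite_verts ne f measure_cyl_pos measure_cyl_vertex_pos by simp
  moreover have "c \<le> 1"
  proof -
    obtain v where v: "v \<in> verts G" using ne by blast
    have "measure M (cyl G (f v)) \<le> measure M (cyl G v)"
      using finite_measure_mono[OF cyl_subset_cyl_rng sets_cyl] f[OF v] verts_mor[OF v] by metis
    then have "c * measure M (cyl G v) \<le> 1 * measure M (cyl G v)" using c_le[OF v] by simp
    then show ?thesis using measure_cyl_vertex_pos[OF v] by (simp only: mult_le_cancel_right_pos)
  qed
  moreover have "c * measure M (cyl G \<mu>) \<le> measure M (cyl G (cmp G \<mu> (f (src G \<mu>))))"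
    if \<mu>: "\<mu> \<in> mor G" for \<mu>
  proof -
    let ?v = "src G \<mu>"
    have v: "?v \<in> verts G" using src_in_verts[OF \<mu>] .
    have "c * measure M (cyl G \<mu>) * measure M (cyl G ?v) \<le> measure M (cyl G \<mu>) * measure M (cyl G (f ?v))"
      using mult_left_mono[OF c_le[OF v] measure_nonneg] by (simp add: ac_simps)
    also have "\<dots> = measure M (cyl G (cmp G \<mu> (f ?v))) * measure M (cyl G ?v)"
      using measure_cyl_cmp[OF \<mu>, of "f ?v"] f[OF v] by simp
    finally show ?thesis using measure_cyl_vertex_pos[OF v] by simp
  qed
  ultimately show ?thesis using that by blast
qed

lemma measure_equaliser_eq_zero:
  assumes "y \<in> paths G" "shift m y \<noteq> shift n y"
  shows "measure M (equaliser G m n) = 0"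
proof -
  obtain l where l: "l \<in> mor G" "cyl G l \<inter> equaliser G m n = {}"
    using equaliser_avoided_by_cylinder[OF assms] by blast
  have "\<exists>\<nu>. \<nu> \<in> mor G \<and> rng G \<nu> = v \<and> (\<forall>\<mu>\<in>mor G. src G \<mu> = v \<longrightarrow> cyl G (cmp G \<mu> \<nu>) \<inter> equaliser G m n = {})"
    if v: "v \<in> verts G" for v
  proof -
    obtain a where a: "a \<in> mor G" "rng G a = v" "src G a = rng G l"
      using strongly_connected v rng_in_verts[OF l(1)] unfolding strongly_connected_def by blast
    have "cyl G (cmp G \<mu> (cmp G a l)) \<inter> equaliser G m n = {}" if "\<mu> \<in> mor G" "src G \<mu> = v" for \<mu>
      using cyl_cmp_disjoint_equaliser[OF cyl_cmp_disjoint_equaliser[OF l(2) a(1) l(1) a(3)] that(1)]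
        cmp_mor rng_cmp a l(1) that(2) by auto
    then show ?thesis using cmp_mor[OF a(1) l(1) a(3)] rng_cmp[OF a(1) l(1) a(3)] a(2) by blast
  qed
  then obtain f where f: "\<And>v. v \<in> verts G \<Longrightarrow> f v \<in> mor G \<and> rng G (f v) = v \<and>
      (\<forall>\<mu>\<in>mor G. src G \<mu> = v \<longrightarrow> cyl G (cmp G \<mu> (f v)) \<inter> equaliser G m n = {})"
    by metis
  obtain c where "0 < c" "c \<le> 1"
    and c: "\<And>\<mu>. \<mu> \<in> mor G \<Longrightarrow> c * measure M (cyl G \<mu>) \<le> measure M (cyl G (cmp G \<mu> (f (src G \<mu>))))"
    using uniform_ratio_cyl_cmp f by metis
  show ?thesis
  proof (rule measure_null_if_uniformly_avoided[OF sets_equaliser \<open>0 < c\<close> \<open>c \<le> 1\<close>])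
    show "uniformly_avoided c (equaliser G m n)"
      unfolding uniformly_avoided_def using c f[OF src_in_verts] by blast
  qed
qed

lemma diff_in_Per_iff:
  "(\<lambda>i. int (m i) - int (n i)) \<in> Per G \<longleftrightarrow> (\<forall>x\<in>paths G. shift m x = shift n x)"
proof
  assume "(\<lambda>i. int (m i) - int (n i)) \<in> Per G"
  then obtain m' n' where d: "(\<lambda>i. int (m i) - int (n i)) = (\<lambda>i. int (m' i) - int (n' i))"
    and per: "\<forall>x\<in>paths G. shift m' x = shift n' x"
    unfolding Per_def by blast
  show "\<forall>x\<in>paths G. shift m x = shift n x"
  proof (rule ccontr)
    assume "\<not> ?thesis"
    then obtain y where "y \<in> paths G" "shift m y \<noteq> shift n y" by blast
    then obtain l where l: "l \<in> mor G" "cyl G l \<inter> equaliser G m n = {}"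
      using equaliser_avoided_by_cylinder by blast
    \<comment> \<open>prefix \<open>l\<close> by \<open>\<kappa>\<close> of degree \<open>b\<close> with \<open>b + m = m' + a\<close> and \<open>b + n = n' + a\<close>\<close>
    define b where "b = (\<lambda>i. max (m i) (m' i) - m i)"
    define a where "a = (\<lambda>i. max (m i) (m' i) - m' i)"
    obtain \<kappa> where \<kappa>: "\<kappa> \<in> mor G" "src G \<kappa> = rng G l" "deg G \<kappa> = b"
      using exists_mor_src_deg[OF rng_in_verts[OF l(1)]] by blast
    obtain x where x: "x \<in> cyl G (cmp G \<kappa> l)" using cyl_nonempty cmp_mor[OF \<kappa>(1) l(1) \<kappa>(2)] by blast
    have "shift b x \<in> cyl G l" using cyl_cmpD(2)[OF \<kappa>(1) l(1) \<kappa>(2) x] \<kappa>(3) by simp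
    then have "shift m (shift b x) \<noteq> shift n (shift b x)"
      using l(2) cyl_subset_paths unfolding equaliser_def by blast
    then have "shift (padd b m) x \<noteq> shift (padd b n) x" by (simp add: shift_shift)
    moreover have "padd b m = padd m' a" by (auto simp: padd_def a_def b_def)
    moreover have "padd b n = padd n' a"
    proof
      fix i
      have "int (m i) - int (n i) = int (m' i) - int (n' i)" using fun_cong[OF d, of i] by simp
      then show "padd b n i = padd n' a i" unfolding padd_def a_def b_def by auto
    qed
    moreover have "x \<in> paths G" using x cyl_subset_paths by blast
    ultimately show False using per by (metis shift_shift)
  qed
qed (auto simp: Per_def)

end

theorem proposition8p2:
  fixes G :: "('a, 'k::finite) kgraph"
    and M :: "(('k \<Rightarrow> nat) \<Rightarrow> ('k \<Rightarrow> nat) \<Rightarrow> 'a) measure"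
    and m n :: "'k \<Rightarrow> nat"
  assumes "k_graph G" and "standing G" and "finite_kgraph G" and "strongly_connected G"
    and "prob_space M"
    and "space M = paths G" and "sets M = sets (path_borel G)"
    and "\<forall>l\<in>mor G. measure M (cyl G l) = inverse (rho_pow G (deg G l)) * xLam G (src G l)"
  shows "{x \<in> paths G. shift m x = shift n x} \<in> sets M \<and>
         measure M {x \<in> paths G. shift m x = shift n x} =
           (if (\<lambda>i. int (m i) - int (n i)) \<in> Per G then 1 else 0)"
proof -
  interpret kgraph_measure G M
    using assms by (simp add: kgraph_measure_def kgraph_theory_def kgraph_measure_axioms_def)
  have E: "{x \<in> paths G. shift m x = shift n x} = equaliser G m n"
    by (simp add: equaliser_def)
  show ?thesis
  proof (cases "\<forall>x\<in>paths G. shift m x = shift n x")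
    case True
    then have "equaliser G m n = space M" by (auto simp: equaliser_def space_M)
    with True show ?thesis by (simp add: E diff_in_Per_iff prob_space)
  next
    case False
    then obtain y where "y \<in> paths G" "shift m y \<noteq> shift n y" by blast
    with False show ?thesis by (simp add: E diff_in_Per_iff sets_equaliser measure_equaliser_eq_zero)
  qed
qed

end
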